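(* Under the standing setting described in the context (in particular, $\mathcal{A}$ is a nonempty compact controlled invariant set satisfying the local $\ell_p$-stabilizability assumption, and $\alpha$ satisfies the stated bounds with $\bar p\ge p$), define $\mathbb{V}_{\infty}:=\{x\in\mathbb{R}^n : \mathcal{V}(\{x\})<\infty\}$ and $\mathbb{W}_{1}:=\{x\in\mathbb{R}^n : \mathcal{W}(\{x\})<1\}$. Then $\mathbb{V}_{\infty}=\mathbb{W}_{1}=\mathcal{D}_{\mathcal{A}}$.
   Context: Let $\|\cdot\|$ be a norm on $\mathbb{R}^n$ and $\mathrm{dist}(x,\Omega):=\inf_{y\in\Omega}\|x-y\|$. Let $\mathcal{K}(\mathbb{R}^n)$ denote the nonempty compact subsets of $\mathbb{R}^n$. Consider the discrete-time system $x_{k+1}=f(x_k,u_k)$, $k\in\mathbb{Z}_+$, where $f:\mathbb{R}^n\times\mathbb{R}^m\to\mathbb{R}^n$ is continuous and the inputs satisfy $u_k\in U$ for a nonempty compact $U\subset\mathbb{R}^m$. For $x\in\mathbb{R}^n$ and an input signal $\pi:\mathbb{Z}_+\to U$, the trajectory $\varphi_x^\pi$ is defined by $\varphi_x^\pi(0)=x$, $\varphi_x^\pi(k+1)=f(\varphi_x^\pi(k),\pi(k))$. For $X\subseteq\mathbb{R}^n$ and $k\in\mathbb{Z}_+$, the reachable set is $\mathcal{R}(X,k):=\{\varphi_x^\pi(k): x\in X,\ \pi\in U^{\mathbb{Z}_+}\}$. Let $\mathcal{A}\in\mathcal{K}(\mathbb{R}^n)$ be controlled invariant: for every $x\in\mathcal{A}$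 there is $u\in U$ with $f(x,u)\in\mathcal{A}$. Assume local $\ell_p$-stabilizability: there exist $r>0$, $M\ge1$, $p>0$ and $\lambda:[0,r]\times\mathbb{Z}_+\to\mathbb{R}_+$ such that (1) for each $k$, $s\mapsto\lambda(s,k)$ is continuous, nondecreasing, $\lambda(0,k)=0$; for each $s$, $k\mapsto\lambda(s,k)$ is nonincreasing and $\lambda(s,0)\le s$; (2) $\sum_{k=0}^\infty\lambda(r,k)^p<\infty$; (3) for every $x$ with $\mathrm{dist}(x,\mathcal{A})\le r$ there exists $\pi\in U^{\mathbb{Z}_+}$ with $\mathrm{dist}(\varphi_x^\pi(k),\mathcal{A})\le M\lambda(\mathrm{dist}(x,\mathcal{A}),k)$ for all $k\in\mathbb{Z}_+$. The domain of stabilization is $\mathcal{D}_{\mathcal{A}}:=\{x\in\mathbb{R}^n:\exists\pi\in U^{\mathbb{Z}_+}\text{ with }\lim_{k\to\infty}\mathrm{dist}(\varphi_x^\pi(k),\mathcal{A})=0\}$. Let $\alpha:\mathbb{R}^n\to\mathbb{R}_+$ be continuous with $\underline{\alpha}\,\mathrm{dist}(x,\mathcal{A})^{\bar p}\le\alpha(x)\le\overline{\alpha}\,\mathrm{dist}(x,\mathcal{A})^{\bar p}$ for all $x$, for some constants $\underline{\alpha},\overline{\alpha}>0$ and $\bar p\ge p$. Define $\Psi(X):=\inf_{y\in X}\alpha(y)$ for $X\in\mathcal{K}(\mathbb{R}^n)$, $\mathcal{V}(X):=\sum_{k=0}^\infty\Psi(\mathcal{R}(X,k))\in[0,\infty]$,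 and $\mathcal{W}(X):=1-\exp(-\mathcal{V}(X))$ with the convention $\exp(-\infty)=0$. *)

theory Defs
  imports "HOL-Analysis.Analysis"
begin

definition is_norm :: "('a::real_vector \<Rightarrow> real) \<Rightarrow> bool" where
  "is_norm N \<longleftrightarrow> (\<forall>x. N x \<ge> 0) \<and> (\<forall>x. N x = 0 \<longleftrightarrow> x = 0)
     \<and> (\<forall>c x. N (c *\<^sub>R x) = \<bar>c\<bar> * N x) \<and> (\<forall>x y. N (x + y) \<le> N x + N y)"

definition set_dist :: "('a::real_vector \<Rightarrow> real) \<Rightarrow> 'a \<Rightarrow> 'a set \<Rightarrow> real" where
  "set_dist N x \<Omega> = Inf ((\<lambda>y. N (x - y)) ` \<Omega>)"

primrec traj :: "('a \<Rightarrow> 'b \<Rightarrow> 'a) \<Rightarrow> 'a \<Rightarrow> (nat \<Rightarrow> 'b) \<Rightarrow> nat \<Rightarrow> 'a" where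
  "traj f x \<pi> 0 = x"
| "traj f x \<pi> (Suc k) = f (traj f x \<pi> k) (\<pi> k)"

definition reach :: "('a \<Rightarrow> 'b \<Rightarrow> 'a) \<Rightarrow> 'b set \<Rightarrow> 'a set \<Rightarrow> nat \<Rightarrow> 'a set" where
  "reach f U X k = {traj f x \<pi> k | x \<pi>. x \<in> X \<and> (\<forall>j. \<pi> j \<in> U)}"

definition Psi :: "('a \<Rightarrow> real) \<Rightarrow> 'a set \<Rightarrow> real" where
  "Psi \<alpha> X = Inf (\<alpha> ` X)"

definition Vfun :: "('a \<Rightarrow> 'b \<Rightarrow> 'a) \<Rightarrow> 'b set \<Rightarrow> ('a \<Rightarrow> real) \<Rightarrow> 'a set \<Rightarrow> ennreal" where
  "Vfun f U \<alpha> X = (\<Sum>k. ennreal (Psi \<alpha> (reach f U X k)))"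

definition Wfun :: "('a \<Rightarrow> 'b \<Rightarrow> 'a) \<Rightarrow> 'b set \<Rightarrow> ('a \<Rightarrow> real) \<Rightarrow> 'a set \<Rightarrow> real" where
  "Wfun f U \<alpha> X = (if Vfun f U \<alpha> X = \<infinity> then 1 else 1 - exp (- enn2real (Vfun f U \<alpha> X)))"

definition stab_domain :: "('a::real_vector \<Rightarrow> real) \<Rightarrow> ('a \<Rightarrow> 'b \<Rightarrow> 'a) \<Rightarrow> 'b set \<Rightarrow> 'a set \<Rightarrow> 'a set" where
  "stab_domain N f U A = {x. \<exists>\<pi>. (\<forall>k. \<pi> k \<in> U) \<and>
      (\<lambda>k. set_dist N (traj f x \<pi> k) A) \<longlonglongrightarrow> 0}"

end

theory Submission
  imports Defs
begin

text \<open>Because the stage cost \<open>\<alpha>\<close> is comparable to \<open>dist(x, A) ^ pbar\<close>, a finite cost sum from \<open>x\<close>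
forces the minimal cost over some reachable set below \<open>a_lo * r ^ pbar\<close>; hence some
trajectory from \<open>x\<close> enters the \<open>r\<close>-neighbourhood of \<open>A\<close>, where local stabilizability
drives it to \<open>A\<close>. Conversely, a trajectory converging to \<open>A\<close> enters that neighbourhood
after finitely many steps; continuing with the stabilizing input gives stage costs at most
a constant times \<open>lam(r, j) ^ p\<close>, because \<open>pbar \<ge> p\<close> and \<open>lam(r, j) \<le> r\<close>, so the cost
sum converges. Finally \<open>W < 1\<close> iff \<open>V < \<infinity>\<close>, as \<open>exp\<close> is positive.\<close>

definition splice_inputs :: "nat \<Rightarrow> (nat \<Rightarrow> 'b) \<Rightarrow> (nat \<Rightarrow> 'b) \<Rightarrow> nat \<Rightarrow> 'b" where
  "splice_inputs k \<pi>1 \<pi>2 = (\<lambda>j. if j < k then \<pi>1 j else \<pi>2 (j - k))"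

lemma traj_splice_inputs_prefix:
  "i \<le> k \<Longrightarrow> traj f x (splice_inputs k \<pi>1 \<pi>2) i = traj f x \<pi>1 i"
  by (induction i) (auto simp: splice_inputs_def)

lemma splice_inputs_shift [simp]: "splice_inputs k \<pi>1 \<pi>2 (k + j) = \<pi>2 j"
  by (simp add: splice_inputs_def)

lemma traj_splice_inputs:
  "traj f x (splice_inputs k \<pi>1 \<pi>2) (k + j) = traj f (traj f x \<pi>1 k) \<pi>2 j"
  by (induction j) (simp_all add: traj_splice_inputs_prefix)

lemma splice_inputs_in:
  "\<forall>j. \<pi>1 j \<in> U \<Longrightarrow> \<forall>j. \<pi>2 j \<in> U \<Longrightarrow> \<forall>j. splice_inputs k \<pi>1 \<pi>2 j \<in> U"
  by (simp add: splice_inputs_def)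

lemma traj_in_reach: "x \<in> X \<Longrightarrow> \<forall>j. \<pi> j \<in> U \<Longrightarrow> traj f x \<pi> k \<in> reach f U X k"
  unfolding reach_def by blast

lemma reach_singleton_nonempty: "U \<noteq> {} \<Longrightarrow> reach f U {x} k \<noteq> {}"
  using traj_in_reach[of x "{x}" "\<lambda>_. u" U f k for u] by blast

lemma set_dist_nonneg: "is_norm N \<Longrightarrow> A \<noteq> {} \<Longrightarrow> set_dist N x A \<ge> 0"
  unfolding set_dist_def is_norm_def by (auto intro!: cInf_greatest)

lemma Psi_nonneg: "(\<And>y. \<alpha> y \<ge> 0) \<Longrightarrow> X \<noteq> {} \<Longrightarrow> Psi \<alpha> X \<ge> 0"
  unfolding Psi_def by (auto intro!: cInf_greatest)

lemma Psi_le: "(\<And>y. \<alpha> y \<ge> 0) \<Longrightarrow> y \<in> X \<Longrightarrow> Psi \<alpha> X \<le> \<alpha> y"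
  unfolding Psi_def by (rule cInf_lower) (auto simp: bdd_below_def)

lemma Psi_lessD: "Psi \<alpha> X < c \<Longrightarrow> X \<noteq> {} \<Longrightarrow> \<exists>y\<in>X. \<alpha> y < c"
  unfolding Psi_def using cInf_lessD[of "\<alpha> ` X" c] by blast

lemma Vfun_finite_iff_summable:
  assumes "\<And>k. Psi \<alpha> (reach f U X k) \<ge> 0"
  shows "Vfun f U \<alpha> X < \<infinity> \<longleftrightarrow> summable (\<lambda>k. Psi \<alpha> (reach f U X k))"
  unfolding Vfun_def
  using ennreal_suminf_neq_top summable_suminf_not_top assms
  by (metis infinity_ennreal_def top.not_eq_extremum)

lemma Wfun_less_one_iff: "Wfun f U \<alpha> X < 1 \<longleftrightarrow> Vfun f U \<alpha> X < \<infinity>"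
  unfolding Wfun_def by (simp add: top.not_eq_extremum)

lemma tendsto_zero_if_summable_powr:
  fixes a :: "nat \<Rightarrow> real"
  assumes "\<And>k. a k \<ge> 0" "p > 0" "summable (\<lambda>k. a k powr p)"
  shows "a \<longlonglongrightarrow> 0"
proof -
  have "(\<lambda>k. (a k powr p) powr (1/p)) \<longlonglongrightarrow> 0"
    using assms by (intro tendsto_zero_powrI[where b="1/p"] summable_LIMSEQ_zero) auto
  moreover have "(a k powr p) powr (1/p) = a k" for k
    using assms by (simp add: powr_powr)
  ultimately show ?thesis by simp
qed

locale lp_stabilizable =
  fixes N :: "'a::real_vector \<Rightarrow> real" and f :: "'a \<Rightarrow> 'b \<Rightarrow> 'a"
    and U :: "'b set" and A :: "'a set"
    and r M p :: real and lam :: "real \<Rightarrow> nat \<Rightarrow> real"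
  assumes norm: "is_norm N" and U_ne: "U \<noteq> {}" and A_ne: "A \<noteq> {}"
    and r_pos: "r > 0" and M_nonneg: "M \<ge> 0" and p_pos: "p > 0"
    and lam_nonneg: "\<forall>s\<in>{0..r}. \<forall>k. lam s k \<ge> 0"
    and lam_mono: "\<forall>k. mono_on {0..r} (\<lambda>s. lam s k)"
    and lam_decr: "\<forall>s\<in>{0..r}. \<forall>k. lam s (Suc k) \<le> lam s k"
    and lam_init: "\<forall>s\<in>{0..r}. lam s 0 \<le> s"
    and lam_sum: "summable (\<lambda>k. lam r k powr p)"
    and stab: "\<forall>x. set_dist N x A \<le> r \<longrightarrow>
                 (\<exists>\<pi>. (\<forall>k. \<pi> k \<in> U) \<and>
                   (\<forall>k. set_dist N (traj f x \<pi> k) A \<le> M * lam (set_dist N x A) k))"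
begin

lemma lam_radius_nonneg: "lam r k \<ge> 0"
  using lam_nonneg r_pos by simp

lemma lam_radius_le: "lam r k \<le> r"
proof -
  have "decseq (lam r)"
    using lam_decr r_pos by (intro decseq_SucI) simp
  then have "lam r k \<le> lam r 0"
    by (simp add: decseq_def)
  also have "\<dots> \<le> r"
    using lam_init r_pos by simp
  finally show ?thesis .
qed

lemma lam_radius_tendsto_zero: "lam r \<longlonglongrightarrow> 0"
  using tendsto_zero_if_summable_powr[OF lam_radius_nonneg p_pos lam_sum] .

lemma uniformly_stabilizable:
  assumes "set_dist N y A \<le> r"
  obtains \<pi> where "\<forall>k. \<pi> k \<in> U" "\<And>k. set_dist N (traj f y \<pi> k) A \<le> M * lam r k"
proof -
  obtain \<pi> where \<pi>: "\<forall>k. \<pi> k \<in> U"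
    "\<And>k. set_dist N (traj f y \<pi> k) A \<le> M * lam (set_dist N y A) k"
    using stab assms by blast
  have "lam (set_dist N y A) k \<le> lam r k" for k
    using assms set_dist_nonneg[OF norm A_ne] r_pos
    by (intro mono_onD[OF lam_mono[rule_format]]) auto
  then have "set_dist N (traj f y \<pi> k) A \<le> M * lam r k" for k
    using M_nonneg by (intro order_trans[OF \<pi>(2)] mult_left_mono)
  with \<pi>(1) show thesis by (rule that)
qed

lemma stab_domain_if_reaches_nbhd:
  assumes "\<forall>j. \<pi> j \<in> U" "set_dist N (traj f x \<pi> k) A \<le> r"
  shows "x \<in> stab_domain N f U A"
proof -
  obtain \<pi>2 where \<pi>2: "\<forall>j. \<pi>2 j \<in> U"
    "\<And>j. set_dist N (traj f (traj f x \<pi> k) \<pi>2 j) A \<le> M * lam r j"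
    using uniformly_stabilizable[OF assms(2)] by blast
  let ?\<sigma> = "splice_inputs k \<pi> \<pi>2"
  have "(\<lambda>j. set_dist N (traj f x ?\<sigma> (j + k)) A) \<longlonglongrightarrow> 0"
  proof (rule real_tendsto_sandwich[where f="\<lambda>_. 0" and h="\<lambda>j. M * lam r j"])
    show "\<forall>\<^sub>F j in sequentially. 0 \<le> set_dist N (traj f x ?\<sigma> (j + k)) A"
      using set_dist_nonneg[OF norm A_ne] by simp
    show "\<forall>\<^sub>F j in sequentially. set_dist N (traj f x ?\<sigma> (j + k)) A \<le> M * lam r j"
      using \<pi>2(2) by (simp add: add.commute[of _ k] traj_splice_inputs)
    show "(\<lambda>j. M * lam r j) \<longlonglongrightarrow> 0"
      using tendsto_mult_right_zero[OF lam_radius_tendsto_zero] by simp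
  qed simp
  then have "(\<lambda>j. set_dist N (traj f x ?\<sigma> j) A) \<longlonglongrightarrow> 0"
    by (rule LIMSEQ_offset)
  moreover have "\<forall>j. ?\<sigma> j \<in> U"
    by (rule splice_inputs_in[OF assms(1) \<pi>2(1)])
  ultimately show ?thesis
    unfolding stab_domain_def by blast
qed

end

locale lp_stabilizable_cost = lp_stabilizable N f U A r M p lam
  for N :: "'a::real_vector \<Rightarrow> real" and f :: "'a \<Rightarrow> 'b \<Rightarrow> 'a"
    and U A r M p lam +
  fixes \<alpha> :: "'a \<Rightarrow> real" and a_lo a_hi pbar :: real
  assumes a_lo_pos: "a_lo > 0" and a_hi_nonneg: "a_hi \<ge> 0" and pbar_ge: "pbar \<ge> p"
    and \<alpha>_bounds: "\<forall>x. a_lo * set_dist N x A powr pbar \<le> \<alpha> x \<and>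
                      \<alpha> x \<le> a_hi * set_dist N x A powr pbar"
begin

lemma \<alpha>_nonneg: "\<alpha> y \<ge> 0"
proof -
  have "0 \<le> a_lo * set_dist N y A powr pbar"
    using a_lo_pos by simp
  also have "\<dots> \<le> \<alpha> y"
    using \<alpha>_bounds by blast
  finally show ?thesis .
qed

lemma Psi_reach_nonneg: "Psi \<alpha> (reach f U {x} k) \<ge> 0"
  by (intro Psi_nonneg \<alpha>_nonneg reach_singleton_nonempty U_ne)

lemma Vfun_singleton_finite_iff_summable:
  "Vfun f U \<alpha> {x} < \<infinity> \<longleftrightarrow> summable (\<lambda>k. Psi \<alpha> (reach f U {x} k))"
  by (rule Vfun_finite_iff_summable[OF Psi_reach_nonneg])

lemma set_dist_le_if_cost_less:
  assumes "\<alpha> y < a_lo * r powr pbar"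
  shows "set_dist N y A \<le> r"
proof (rule ccontr)
  assume "\<not> set_dist N y A \<le> r"
  then have "r powr pbar \<le> set_dist N y A powr pbar"
    using r_pos pbar_ge p_pos by (intro powr_mono2) auto
  then have "a_lo * r powr pbar \<le> a_lo * set_dist N y A powr pbar"
    using a_lo_pos by simp
  also have "\<dots> \<le> \<alpha> y"
    using \<alpha>_bounds by blast
  finally show False
    using assms by simp
qed

lemma cost_le_if_set_dist_le:
  assumes "set_dist N y A \<le> M * lam r j"
  shows "\<alpha> y \<le> a_hi * M powr pbar * r powr (pbar - p) * lam r j powr p"
proof -
  have lam_nonneg: "lam r j \<ge> 0"
    by (rule lam_radius_nonneg)
  have "set_dist N y A powr pbar \<le> (M * lam r j) powr pbar"
    using assms set_dist_nonneg[OF norm A_ne] pbar_ge p_pos by (intro powr_mono2) auto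
  also have "\<dots> = M powr pbar * lam r j powr p * lam r j powr (pbar - p)"
    using M_nonneg lam_nonneg by (simp add: powr_mult mult.assoc powr_add[symmetric])
  also have "\<dots> \<le> M powr pbar * lam r j powr p * r powr (pbar - p)"
    using pbar_ge lam_nonneg lam_radius_le by (intro mult_left_mono powr_mono2) auto
  finally have dist_bound:
    "set_dist N y A powr pbar \<le> M powr pbar * lam r j powr p * r powr (pbar - p)" .
  have "\<alpha> y \<le> a_hi * set_dist N y A powr pbar"
    using \<alpha>_bounds by blast
  also have "\<dots> \<le> a_hi * (M powr pbar * lam r j powr p * r powr (pbar - p))"
    by (intro mult_left_mono dist_bound a_hi_nonneg)
  also have "\<dots> = a_hi * M powr pbar * r powr (pbar - p) * lam r j powr p"
    by (simp add: mult_ac)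
  finally show ?thesis .
qed

lemma stab_domain_if_Vfun_finite:
  assumes "Vfun f U \<alpha> {x} < \<infinity>"
  shows "x \<in> stab_domain N f U A"
proof -
  have "(\<lambda>k. Psi \<alpha> (reach f U {x} k)) \<longlonglongrightarrow> 0"
    using assms by (intro summable_LIMSEQ_zero Vfun_singleton_finite_iff_summable[THEN iffD1])
  moreover have "a_lo * r powr pbar > 0"
    using a_lo_pos r_pos by simp
  ultimately obtain k where "Psi \<alpha> (reach f U {x} k) < a_lo * r powr pbar"
    by (metis order_tendstoD(2) eventually_sequentially order.refl)
  then have "\<exists>y\<in>reach f U {x} k. \<alpha> y < a_lo * r powr pbar"
    by (rule Psi_lessD[OF _ reach_singleton_nonempty[OF U_ne]])
  then obtain y where "y \<in> reach f U {x} k" "\<alpha> y < a_lo * r powr pbar"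
    by blast
  then obtain \<pi> where "\<forall>j. \<pi> j \<in> U" "set_dist N (traj f x \<pi> k) A \<le> r"
    using set_dist_le_if_cost_less unfolding reach_def by auto
  then show ?thesis
    by (rule stab_domain_if_reaches_nbhd)
qed

lemma Vfun_finite_if_stab_domain:
  assumes "x \<in> stab_domain N f U A"
  shows "Vfun f U \<alpha> {x} < \<infinity>"
proof -
  obtain \<pi> where \<pi>: "\<forall>j. \<pi> j \<in> U" "(\<lambda>k. set_dist N (traj f x \<pi> k) A) \<longlonglongrightarrow> 0"
    using assms unfolding stab_domain_def by blast
  then obtain k where "set_dist N (traj f x \<pi> k) A < r"
    using r_pos by (metis order_tendstoD(2) eventually_sequentially order.refl)
  then obtain \<pi>2 where \<pi>2: "\<forall>j. \<pi>2 j \<in> U"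
    "\<And>j. set_dist N (traj f (traj f x \<pi> k) \<pi>2 j) A \<le> M * lam r j"
    using uniformly_stabilizable[OF less_imp_le] by blast
  define C where "C = a_hi * M powr pbar * r powr (pbar - p)"
  have "Psi \<alpha> (reach f U {x} (j + k)) \<le> C * lam r j powr p" for j
  proof -
    have "traj f (traj f x \<pi> k) \<pi>2 j \<in> reach f U {x} (k + j)"
      using traj_in_reach[of x "{x}" "splice_inputs k \<pi> \<pi>2" U f "k + j"]
        splice_inputs_in[OF \<pi>(1) \<pi>2(1)] by (simp add: traj_splice_inputs)
    then have "Psi \<alpha> (reach f U {x} (k + j)) \<le> \<alpha> (traj f (traj f x \<pi> k) \<pi>2 j)"
      by (intro Psi_le \<alpha>_nonneg)
    also have "\<dots> \<le> C * lam r j powr p"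
      unfolding C_def by (rule cost_le_if_set_dist_le[OF \<pi>2(2)])
    finally show ?thesis
      by (simp add: add.commute)
  qed
  then have "summable (\<lambda>j. Psi \<alpha> (reach f U {x} (j + k)))"
    using Psi_reach_nonneg by (intro summable_comparison_test'[OF summable_mult[OF lam_sum]]) auto
  then show ?thesis
    by (rule Vfun_singleton_finite_iff_summable[THEN iffD2, OF summable_iff_shift[THEN iffD1]])
qed

lemma Vfun_finite_iff_stab_domain: "Vfun f U \<alpha> {x} < \<infinity> \<longleftrightarrow> x \<in> stab_domain N f U A"
  using stab_domain_if_Vfun_finite Vfun_finite_if_stab_domain by blast

end

theorem theorem2:
  fixes N :: "real^'n \<Rightarrow> real"
    and f :: "real^'n \<Rightarrow> real^'m \<Rightarrow> real^'n"
    and U :: "(real^'m) set"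
    and A :: "(real^'n) set"
    and r M p :: real
    and lam :: "real \<Rightarrow> nat \<Rightarrow> real"
    and \<alpha> :: "real^'n \<Rightarrow> real"
    and a_lo a_hi pbar :: real
  assumes norm: "is_norm N"
    and f_cont: "continuous_on UNIV (\<lambda>(x, u). f x u)"
    and U_compact: "compact U" and U_ne: "U \<noteq> {}"
    and A_compact: "compact A" and A_ne: "A \<noteq> {}"
    and A_inv: "\<forall>x\<in>A. \<exists>u\<in>U. f x u \<in> A"
    and r_pos: "r > 0" and M_ge: "M \<ge> 1" and p_pos: "p > 0"
    and lam_nonneg: "\<forall>s\<in>{0..r}. \<forall>k. lam s k \<ge> 0"
    and lam_cont: "\<forall>k. continuous_on {0..r} (\<lambda>s. lam s k)"
    and lam_mono: "\<forall>k. mono_on {0..r} (\<lambda>s. lam s k)"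
    and lam_zero: "\<forall>k. lam 0 k = 0"
    and lam_decr: "\<forall>s\<in>{0..r}. \<forall>k. lam s (Suc k) \<le> lam s k"
    and lam_init: "\<forall>s\<in>{0..r}. lam s 0 \<le> s"
    and lam_sum: "summable (\<lambda>k. lam r k powr p)"
    and stab: "\<forall>x. set_dist N x A \<le> r \<longrightarrow>
                 (\<exists>\<pi>. (\<forall>k. \<pi> k \<in> U) \<and>
                   (\<forall>k. set_dist N (traj f x \<pi> k) A \<le> M * lam (set_dist N x A) k))"
    and \<alpha>_cont: "continuous_on UNIV \<alpha>"
    and a_lo_pos: "a_lo > 0" and a_hi_pos: "a_hi > 0" and pbar_ge: "pbar \<ge> p"
    and \<alpha>_bounds: "\<forall>x. a_lo * set_dist N x A powr pbar \<le> \<alpha> x \<and>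
                      \<alpha> x \<le> a_hi * set_dist N x A powr pbar"
  shows "{x. Vfun f U \<alpha> {x} < \<infinity>} = {x. Wfun f U \<alpha> {x} < 1}
         \<and> {x. Wfun f U \<alpha> {x} < 1} = stab_domain N f U A"
proof -
  interpret lp_stabilizable_cost N f U A r M p lam \<alpha> a_lo a_hi pbar
    using norm U_ne A_ne r_pos M_ge p_pos lam_nonneg lam_mono lam_decr lam_init lam_sum stab
      a_lo_pos a_hi_pos pbar_ge \<alpha>_bounds
    by unfold_locales auto
  show ?thesis
    by (simp only: Wfun_less_one_iff Vfun_finite_iff_stab_domain Collect_mem_eq simp_thms)
qed

end
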